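(* Let $r\in(0,\infty)$ and let $h:\mathbb{R}^n\to\mathbb{R}$ be a continuous function with compact support such that $\mathrm{supp}\,h\subset\mathbb{B}_r$, $h\ge 0$, and $\int h\,\mathrm{d}\lambda\le 1$. Let $g:\mathbb{R}^n\to\mathbb{R}$ be a continuous probability density function. Then for any $k\in(0,\infty)$ there exists a sequence $\{h_m^g\}_{m=1}^\infty\subset\mathcal{M}^g$ such that \[ \lim_{m\to\infty}\sup_{x\in\overline{\mathbb{B}}_r}\left|(g_k\star h)(x)-h_m^g(x)\right|=0 . \] Furthermore, if $g$ is moreover bounded and uniformly continuous, then \[ \lim_{m\to\infty}\sup_{x\in\mathbb{R}^n}\left|(g_k\star h)(x)-h_m^g(x)\right|=0 . \]
   Context: A probability density function (PDF) is a measurable $g\ge 0$ with $\int g\,\mathrm{d}\lambda=1$ ($\lambda$ Lebesgue measure). $\mathrm{supp}\,h=\{x: h(x)\ne0\}$. $\mathbb{B}_r$ and $\overline{\mathbb{B}}_r$ are the open and closed Euclidean balls of radius $r$ centered at $0$ in $\mathbb{R}^n$. For $k>0$, the dilate of $g$ is $g_k(x)=k^n g(kx)$, and $(g_k\star h)(x)=\int g_k(x-y)h(y)\,\mathrm{d}\lambda(y)$ is convolution. The class $\mathcal{M}^g=\bigcup_{m\in\mathbb{N}}\mathcal{M}^g_m$, where $\mathcal{M}^{g}_m=\{ \sum_{i=1}^{m}c_{i}\sigma_{i}^{-n}g((\cdot-\mu_{i})/\sigma_{i}) :\mu_{i}\in\mathbb{R}^{n},\ \sigma_{i}>0,\ c_i\ge0,\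 \sum_i c_i=1\}$ is the set of $m$-component location-scale finite mixtures of $g$. *)

theory Defs
  imports "HOL-Analysis.Analysis"
begin

definition is_pdf :: "('a::euclidean_space \<Rightarrow> real) \<Rightarrow> bool" where
  "is_pdf g \<longleftrightarrow> g \<in> borel_measurable lborel \<and> (\<forall>x. 0 \<le> g x) \<and>
     (\<integral>\<^sup>+ x. ennreal (g x) \<partial>lborel) = 1"

definition dilate :: "real \<Rightarrow> ('a::euclidean_space \<Rightarrow> real) \<Rightarrow> 'a \<Rightarrow> real" where
  "dilate k g x = k ^ DIM('a) * g (k *\<^sub>R x)"

definition conv :: "('a::euclidean_space \<Rightarrow> real) \<Rightarrow> ('a \<Rightarrow> real) \<Rightarrow> 'a \<Rightarrow> real" where
  "conv f h x = (\<integral> y. f (x - y) * h y \<partial>lborel)"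

definition mixtures_m :: "('a::euclidean_space \<Rightarrow> real) \<Rightarrow> nat \<Rightarrow> ('a \<Rightarrow> real) set" where
  "mixtures_m g m = {f. \<exists>c \<mu> \<sigma>. (\<forall>i<m. 0 \<le> c i \<and> 0 < \<sigma> i) \<and> (\<Sum>i<m. c i) = 1 \<and>
      f = (\<lambda>x. \<Sum>i<m. c i * \<sigma> i powr (- real DIM('a)) * g ((1 / \<sigma> i) *\<^sub>R (x - \<mu> i)))}"

definition mixtures :: "('a::euclidean_space \<Rightarrow> real) \<Rightarrow> ('a \<Rightarrow> real) set" where
  "mixtures g = (\<Union>m. mixtures_m g m)"

end

theory Submission
  imports Defs
begin

(* Discretise the convolution: rounding y down to a fine grid changes g_k(x - y) only slightly,
   uniformly in x, so (g_k * h)(x) is uniformly close to the Riemann sum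
   SUM v. w_v g_k(x - v), where w_v is the h-mass of the grid cell of v. Each g_k(. - v) is a
   location-scale copy of g with scale 1/k, and the weights add up to the integral of h, which is
   at most 1. The missing mass goes to one very wide component s^-n g(x/s), which is uniformly
   small wherever g is bounded on the region swept out by x/s. On the closed ball both uniform
   continuity of g_k and boundedness of g come from compactness; on all of R^n they are exactly
   the extra hypotheses. *)

lemma mixture_sum_in_mixtures:
  fixes g :: "'a::euclidean_space \<Rightarrow> real"
  assumes "finite J" "\<And>j. j \<in> J \<Longrightarrow> 0 \<le> c j \<and> 0 < \<sigma> j" "sum c J = 1"
  shows "(\<lambda>x. \<Sum>j\<in>J. c j * \<sigma> j powr (- real DIM('a)) * g ((1 / \<sigma> j) *\<^sub>R (x - \<mu> j)))
           \<in> mixtures g"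
proof -
  obtain e where e: "bij_betw e {..<card J} J"
    using ex_bij_betw_nat_finite[OF assms(1)] by (auto simp: atLeast0LessThan)
  have "(\<lambda>x. \<Sum>j\<in>J. c j * \<sigma> j powr (- real DIM('a)) * g ((1 / \<sigma> j) *\<^sub>R (x - \<mu> j)))
    = (\<lambda>x. \<Sum>i<card J. (c \<circ> e) i * (\<sigma> \<circ> e) i powr (- real DIM('a))
                        * g ((1 / (\<sigma> \<circ> e) i) *\<^sub>R (x - (\<mu> \<circ> e) i)))"
    unfolding o_def by (rule ext, rule sum.reindex_bij_betw[OF e, symmetric])
  moreover have "\<forall>i<card J. 0 \<le> (c \<circ> e) i \<and> 0 < (\<sigma> \<circ> e) i"
    using e assms(2) unfolding bij_betw_def by auto
  moreover have "(\<Sum>i<card J. (c \<circ> e) i) = 1"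
    using sum.reindex_bij_betw[OF e, of c] assms(3) by (simp add: o_def)
  ultimately show ?thesis unfolding mixtures_def mixtures_m_def by blast
qed

lemma dilate_eq_scale_component:
  assumes "0 < k"
  shows "dilate k g x = (1 / k) powr (- real DIM('a)) * g ((1 / (1 / k)) *\<^sub>R (x::'a::euclidean_space))"
  using assms by (simp add: dilate_def powr_minus powr_realpow power_one_over)

lemma mixture_of_dilates_and_wide_component:
  fixes g :: "'a::euclidean_space \<Rightarrow> real"
  assumes "finite V" "\<And>v. 0 \<le> w v" "sum w V \<le> 1" "0 < \<sigma>" "0 < k"
  shows "(\<lambda>x. (1 - sum w V) * (\<sigma> powr (- real DIM('a)) * g ((1 / \<sigma>) *\<^sub>R x))
               + (\<Sum>v\<in>V. w v * dilate k g (x - v))) \<in> mixtures g"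
proof -
  define c where "c j = (case j of None \<Rightarrow> 1 - sum w V | Some v \<Rightarrow> w v)" for j
  define s where "s j = (case j of None \<Rightarrow> \<sigma> | Some (v::'a) \<Rightarrow> 1 / k)" for j
  define \<mu> where "\<mu> j = (case j of None \<Rightarrow> 0 | Some (v::'a) \<Rightarrow> v)" for j
  have sum_option: "(\<Sum>j\<in>insert None (Some ` V). F j) = F None + (\<Sum>v\<in>V. F (Some v))"
    for F :: "'a option \<Rightarrow> real"
    using assms(1) by (simp add: sum.reindex)
  have "(\<lambda>x. \<Sum>j\<in>insert None (Some ` V). c j * s j powr (- real DIM('a)) * g ((1 / s j) *\<^sub>R (x - \<mu> j)))
        \<in> mixtures g"
    using assms by (intro mixture_sum_in_mixtures) (auto simp: c_def s_def sum_option)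
  then show ?thesis
    using assms(5) by (simp add: sum_option c_def s_def \<mu>_def dilate_eq_scale_component mult.assoc)
qed

definition grid_round :: "real \<Rightarrow> 'a::euclidean_space \<Rightarrow> 'a" where
  "grid_round d y = (\<Sum>b\<in>Basis. (d * of_int \<lfloor>(y \<bullet> b) / d\<rfloor>) *\<^sub>R b)"

lemma grid_round_measurable [measurable]: "grid_round d \<in> borel_measurable borel"
  unfolding grid_round_def by measurable

lemma norm_diff_grid_round_le:
  fixes y :: "'a::euclidean_space"
  assumes "0 < d"
  shows "norm (y - grid_round d y) \<le> real DIM('a) * d"
proof -
  have coord: "\<bar>y \<bullet> b - d * of_int \<lfloor>(y \<bullet> b) / d\<rfloor>\<bar> \<le> d" for b
  proof -
    have "d * of_int \<lfloor>(y \<bullet> b) / d\<rfloor> \<le> d * ((y \<bullet> b) / d)"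
      "d * ((y \<bullet> b) / d) \<le> d * (of_int \<lfloor>(y \<bullet> b) / d\<rfloor> + 1)"
      using assms by (intro mult_left_mono; linarith)+
    then show ?thesis using assms by (simp add: algebra_simps)
  qed
  have "y - grid_round d y = (\<Sum>b\<in>Basis. (y \<bullet> b - d * of_int \<lfloor>(y \<bullet> b) / d\<rfloor>) *\<^sub>R b)"
    unfolding grid_round_def by (subst (1) euclidean_representation[symmetric, of y])
      (simp add: sum_subtractf[symmetric] scaleR_diff_left)
  also have "norm \<dots> \<le> (\<Sum>b\<in>Basis. norm ((y \<bullet> b - d * of_int \<lfloor>(y \<bullet> b) / d\<rfloor>) *\<^sub>R b))"
    by (rule norm_sum)
  also have "\<dots> \<le> (\<Sum>b\<in>(Basis::'a set). d)"
    by (rule sum_mono) (use coord in auto)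
  finally show ?thesis by simp
qed

lemma finite_grid_round_image:
  fixes S :: "'a::euclidean_space set"
  assumes "bounded S" "0 < d"
  shows "finite (grid_round d ` S)"
proof -
  obtain R where R: "\<And>y. y \<in> S \<Longrightarrow> norm y \<le> R"
    using assms(1) bounded_iff by blast
  define N where "N = \<lceil>R / d\<rceil>"
  define coords where "coords y = restrict (\<lambda>b. \<lfloor>(y \<bullet> b) / d\<rfloor>) Basis" for y :: 'a
  have "coords ` S \<subseteq> PiE Basis (\<lambda>_. {-N..N})"
  proof (clarsimp simp: coords_def)
    fix y b assume "y \<in> S" "b \<in> (Basis :: 'a set)"
    then have "\<bar>y \<bullet> b\<bar> \<le> R" using R Basis_le_norm order_trans by blast
    then have "- (R / d) \<le> (y \<bullet> b) / d" "(y \<bullet> b) / d \<le> R / d"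
      using assms(2) by (auto simp: field_simps abs_le_iff)
    moreover have "R / d \<le> of_int N" unfolding N_def by (rule le_of_int_ceiling)
    ultimately show "- N \<le> \<lfloor>(y \<bullet> b) / d\<rfloor> \<and> \<lfloor>(y \<bullet> b) / d\<rfloor> \<le> N"
      by (simp add: le_floor_iff floor_le_iff)
  qed
  then have "finite (coords ` S)"
    by (rule finite_subset) (auto intro: finite_PiE)
  moreover have "grid_round d y = (\<Sum>b\<in>Basis. (d * of_int (coords y b)) *\<^sub>R b)" for y
    unfolding grid_round_def coords_def by (intro sum.cong) auto
  then have "grid_round d ` S = (\<lambda>z. \<Sum>b\<in>Basis. (d * of_int (z b)) *\<^sub>R b) ` coords ` S"
    by (auto simp: image_image)
  ultimately show ?thesis by simp
qed

lemma integrable_continuous_compact_support: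
  fixes f :: "'a::euclidean_space \<Rightarrow> real"
  assumes "continuous_on UNIV f" "compact K" "\<And>y. y \<notin> K \<Longrightarrow> f y = 0"
  shows "integrable lborel f"
proof -
  have "integrable lborel (\<lambda>y. indicator K y *\<^sub>R f y)"
    using assms(1,2) by (intro borel_integrable_compact) (auto intro: continuous_on_subset)
  also have "(\<lambda>y. indicator K y *\<^sub>R f y) = f"
    using assms(3) by (auto simp: indicator_def fun_eq_iff)
  finally show ?thesis .
qed

lemma
  fixes h :: "'a::euclidean_space \<Rightarrow> real" and q :: "'a \<Rightarrow> 'b::t1_space"
  assumes h: "integrable lborel h" and q: "q \<in> borel_measurable lborel"
    and V: "finite V" "q ` {y. h y \<noteq> 0} \<subseteq> V"
  shows integrable_quantized: "integrable lborel (\<lambda>y. F (q y) * h y)"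
    and integral_quantized: "(\<integral>y. F (q y) * h y \<partial>lborel)
           = (\<Sum>v\<in>V. F v * (\<integral>y. indicator (q -` {v}) y * h y \<partial>lborel))"
proof -
  have cells: "integrable lborel (\<lambda>y. indicator (q -` {v}) y * h y)" for v
    using integrable_mult_indicator[OF _ h, of "q -` {v}"] measurable_sets[OF q borel_closed[OF closed_singleton]]
    by simp
  have split: "(\<lambda>y. F (q y) * h y) = (\<lambda>y. \<Sum>v\<in>V. F v * (indicator (q -` {v}) y * h y))"
  proof
    fix y
    have "(\<Sum>v\<in>V. F v * (indicator (q -` {v}) y * h y)) = (\<Sum>v\<in>V. if q y = v then F (q y) * h y else 0)"
      by (rule sum.cong) (auto simp: indicator_def)
    then show "F (q y) * h y = (\<Sum>v\<in>V. F v * (indicator (q -` {v}) y * h y))"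
      using V by (cases "h y = 0") auto
  qed
  show "integrable lborel (\<lambda>y. F (q y) * h y)"
    unfolding split by (intro Bochner_Integration.integrable_sum integrable_mult_right cells)
  show "(\<integral>y. F (q y) * h y \<partial>lborel) = (\<Sum>v\<in>V. F v * (\<integral>y. indicator (q -` {v}) y * h y \<partial>lborel))"
    unfolding split using cells by (simp add: Bochner_Integration.integral_sum)
qed

lemma integral_quantized_error:
  fixes h F :: "'a::euclidean_space \<Rightarrow> real" and q :: "'a \<Rightarrow> 'a"
  assumes h: "integrable lborel h" "\<And>y. 0 \<le> h y" and q: "q \<in> borel_measurable lborel"
    and V: "finite V" "q ` {y. h y \<noteq> 0} \<subseteq> V"
    and Fh: "integrable lborel (\<lambda>y. F y * h y)"
    and close: "\<And>y. h y \<noteq> 0 \<Longrightarrow> \<bar>F y - F (q y)\<bar> \<le> e"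
  shows "\<bar>(\<integral>y. F y * h y \<partial>lborel) - (\<Sum>v\<in>V. F v * (\<integral>y. indicator (q -` {v}) y * h y \<partial>lborel))\<bar>
           \<le> e * integral\<^sup>L lborel h"
proof -
  note quantized = integrable_quantized[OF h(1) q V] integral_quantized[OF h(1) q V]
  have "(\<integral>y. F y * h y \<partial>lborel) - (\<Sum>v\<in>V. F v * (\<integral>y. indicator (q -` {v}) y * h y \<partial>lborel))
      = (\<integral>y. F y * h y - F (q y) * h y \<partial>lborel)"
    unfolding quantized(2)[symmetric] by (rule Bochner_Integration.integral_diff[symmetric, OF Fh quantized(1)])
  also have "\<bar>\<dots>\<bar> \<le> (\<integral>y. e * h y \<partial>lborel)"
  proof (rule integral_abs_bound_integral)
    show "integrable lborel (\<lambda>y. F y * h y - F (q y) * h y)"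
      by (intro Bochner_Integration.integrable_diff Fh quantized(1))
    show "integrable lborel (\<lambda>y. e * h y)"
      using h(1) by simp
    show "\<bar>F y * h y - F (q y) * h y\<bar> \<le> e * h y" for y
      using close[of y] h(2)[of y]
      by (cases "h y = 0") (auto simp: left_diff_distrib[symmetric] abs_mult intro: mult_right_mono)
  qed
  finally show ?thesis by simp
qed

lemma continuous_on_dilate:
  assumes "continuous_on UNIV g"
  shows "continuous_on UNIV (dilate k g)"
  unfolding dilate_def[abs_def]
  by (intro continuous_intros continuous_on_compose2[OF assms]) auto

lemma uniformly_continuous_on_dilate:
  fixes g :: "'a::euclidean_space \<Rightarrow> real"
  assumes "uniformly_continuous_on UNIV g"
  shows "uniformly_continuous_on UNIV (dilate k g)"
proof -
  have "uniformly_continuous_on UNIV (\<lambda>x::'a. k *\<^sub>R x)"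
    by (rule uniformly_continuous_on_cmul) (rule uniformly_continuous_on_id)
  moreover have "uniformly_continuous_on (range (\<lambda>x. k *\<^sub>R x)) g"
    using assms unfolding uniformly_continuous_on_def by blast
  ultimately have "uniformly_continuous_on UNIV (\<lambda>x. g (k *\<^sub>R x))"
    by (rule uniformly_continuous_on_compose)
  then show ?thesis
    unfolding dilate_def[abs_def] by (rule uniformly_continuous_on_cmul_left)
qed

lemma uniformly_continuous_on_translates:
  fixes G :: "'a::real_normed_vector \<Rightarrow> real"
  assumes G: "uniformly_continuous_on U G"
    and U: "\<And>x y. x \<in> T \<Longrightarrow> y \<in> S \<Longrightarrow> cball (x - y) 1 \<subseteq> U" and "0 < e"
  shows "\<exists>\<delta>>0. \<forall>x\<in>T. \<forall>y\<in>S. \<forall>y'. dist y y' < \<delta> \<longrightarrow> \<bar>G (x - y) - G (x - y')\<bar> \<le> e"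
proof -
  obtain \<delta> where "0 < \<delta>" and \<delta>: "\<And>z z'. z \<in> U \<Longrightarrow> z' \<in> U \<Longrightarrow> dist z' z < \<delta> \<Longrightarrow> dist (G z') (G z) < e"
    using G \<open>0 < e\<close> unfolding uniformly_continuous_on_def by metis
  have "\<bar>G (x - y) - G (x - y')\<bar> \<le> e" if "x \<in> T" "y \<in> S" "dist y y' < min 1 \<delta>" for x y y'
  proof -
    have "dist (x - y) (x - y') = dist y y'"
      by (simp add: dist_norm norm_minus_commute)
    then have "x - y \<in> U" "x - y' \<in> U" "dist (x - y) (x - y') < \<delta>"
      using that U[of x y] by auto
    then have "dist (G (x - y')) (G (x - y)) < e"
      using \<delta> by (simp add: dist_commute)
    then show ?thesis
      by (simp add: dist_real_def abs_minus_commute)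
  qed
  moreover have "0 < min 1 \<delta>" using \<open>0 < \<delta>\<close> by simp
  ultimately show ?thesis by blast
qed

lemma conv_approx_by_translates:
  fixes G h :: "'a::euclidean_space \<Rightarrow> real"
  assumes hc: "continuous_on UNIV h" and hK: "compact (closure {y. h y \<noteq> 0})"
    and hpos: "\<And>y. 0 \<le> h y" and Gc: "continuous_on UNIV G"
    and Gu: "uniformly_continuous_on U G"
    and U: "\<And>x y. x \<in> T \<Longrightarrow> h y \<noteq> 0 \<Longrightarrow> cball (x - y) 1 \<subseteq> U" and "0 < e"
  shows "\<exists>V w. finite V \<and> (\<forall>v. 0 \<le> w v) \<and> sum w V = integral\<^sup>L lborel h \<and>
           (\<forall>x\<in>T. \<bar>conv G h x - (\<Sum>v\<in>V. w v * G (x - v))\<bar> \<le> e * integral\<^sup>L lborel h)"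
proof -
  have outside: "h y = 0" if "y \<notin> closure {y. h y \<noteq> 0}" for y
    using that closure_subset by (metis (mono_tags, lifting) mem_Collect_eq subsetD)
  have hI: "integrable lborel h"
    using hc hK outside by (rule integrable_continuous_compact_support)
  have convI: "integrable lborel (\<lambda>y. G (x - y) * h y)" for x
  proof (rule integrable_continuous_compact_support[OF _ hK])
    have "continuous_on UNIV (\<lambda>y. G (x - y))"
      by (rule continuous_on_compose2[OF Gc]) (auto intro: continuous_intros)
    then show "continuous_on UNIV (\<lambda>y. G (x - y) * h y)"
      using hc by (rule continuous_on_mult)
  qed (metis outside mult_zero_right)
  have "\<exists>\<delta>>0. \<forall>x\<in>T. \<forall>y\<in>{y. h y \<noteq> 0}. \<forall>y'. dist y y' < \<delta> \<longrightarrow> \<bar>G (x - y) - G (x - y')\<bar> \<le> e"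
    using U \<open>0 < e\<close> by (intro uniformly_continuous_on_translates[OF Gu]) auto
  then obtain \<delta> where "0 < \<delta>" and modulus: "\<And>x y y'. x \<in> T \<Longrightarrow> h y \<noteq> 0 \<Longrightarrow> dist y y' < \<delta> \<Longrightarrow>
      \<bar>G (x - y) - G (x - y')\<bar> \<le> e"
    by blast
  define d where "d = \<delta> / (real DIM('a) + 1)"
  define q :: "'a \<Rightarrow> 'a" where "q = grid_round d"
  define V where "V = q ` {y. h y \<noteq> 0}"
  define w where "w v = (\<integral>y. indicator (q -` {v}) y * h y \<partial>lborel)" for v
  have "0 < d" "real DIM('a) * d < \<delta>"
    unfolding d_def using \<open>0 < \<delta>\<close> by (simp_all add: field_simps)
  then have close: "dist y (q y) < \<delta>" for y
    using norm_diff_grid_round_le[OF \<open>0 < d\<close>, of y] by (simp add: dist_norm q_def)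
  have "finite V"
    unfolding V_def q_def using \<open>0 < d\<close> hK
    by (intro finite_grid_round_image) (auto intro: bounded_subset compact_imp_bounded closure_subset)
  have q: "q \<in> borel_measurable lborel" "q ` {y. h y \<noteq> 0} \<subseteq> V"
    unfolding q_def V_def by (simp_all add: grid_round_measurable)
  have "0 \<le> w v" for v
    unfolding w_def by (intro Bochner_Integration.integral_nonneg) (simp add: hpos)
  moreover have "sum w V = integral\<^sup>L lborel h"
    using integral_quantized[OF hI q(1) \<open>finite V\<close> q(2), of "\<lambda>_. 1"] by (simp add: w_def)
  moreover have "\<bar>conv G h x - (\<Sum>v\<in>V. w v * G (x - v))\<bar> \<le> e * integral\<^sup>L lborel h"
    if "x \<in> T" for x
    using integral_quantized_error[OF hI hpos q(1) \<open>finite V\<close> q(2) convI modulus[OF that _ close]]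
    unfolding conv_def w_def by (simp add: mult.commute)
  ultimately show ?thesis
    using \<open>finite V\<close> by blast
qed

lemma wide_component_small:
  fixes g :: "'a::euclidean_space \<Rightarrow> real"
  assumes "bounded (g ` T)" and star: "\<And>x t. x \<in> T \<Longrightarrow> 0 \<le> t \<Longrightarrow> t \<le> 1 \<Longrightarrow> t *\<^sub>R x \<in> T"
    and "0 < e"
  shows "\<exists>\<sigma>>0. \<forall>x\<in>T. \<bar>\<sigma> powr (- real DIM('a)) * g ((1 / \<sigma>) *\<^sub>R x)\<bar> \<le> e"
proof -
  obtain M where M: "\<And>x. x \<in> T \<Longrightarrow> \<bar>g x\<bar> \<le> M"
    using assms(1) bounded_iff by (metis imageI real_norm_def)
  define \<sigma> where "\<sigma> = max 1 (M / e)"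
  have "1 \<le> \<sigma>" "M / e \<le> \<sigma>"
    unfolding \<sigma>_def by simp_all
  then have "M \<le> e * \<sigma>"
    using \<open>0 < e\<close> by (simp add: pos_divide_le_eq mult.commute)
  have "\<bar>\<sigma> powr (- real DIM('a)) * g ((1 / \<sigma>) *\<^sub>R x)\<bar> \<le> e" if "x \<in> T" for x
  proof -
    have "\<sigma> powr (- real DIM('a)) \<le> \<sigma> powr (-1)"
      using \<open>1 \<le> \<sigma>\<close> DIM_positive[where 'a='a] by (intro powr_mono) auto
    then have "\<sigma> powr (- real DIM('a)) \<le> 1 / \<sigma>"
      using \<open>1 \<le> \<sigma>\<close> by (simp add: powr_minus_divide)
    moreover have "\<bar>g ((1 / \<sigma>) *\<^sub>R x)\<bar> \<le> M"
      using \<open>1 \<le> \<sigma>\<close> by (intro M star \<open>x \<in> T\<close>) auto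
    ultimately have "\<bar>\<sigma> powr (- real DIM('a)) * g ((1 / \<sigma>) *\<^sub>R x)\<bar> \<le> 1 / \<sigma> * M"
      using \<open>1 \<le> \<sigma>\<close> unfolding abs_mult abs_of_nonneg[OF powr_ge_zero] by (intro mult_mono) auto
    also have "\<dots> \<le> e"
      using \<open>1 \<le> \<sigma>\<close> \<open>M \<le> e * \<sigma>\<close> by (simp add: field_simps)
    finally show ?thesis .
  qed
  moreover have "0 < \<sigma>" using \<open>1 \<le> \<sigma>\<close> by simp
  ultimately show ?thesis by blast
qed

lemma conv_dilate_approx_by_mixture:
  fixes h g :: "'a::euclidean_space \<Rightarrow> real"
  assumes hc: "continuous_on UNIV h" and hK: "compact (closure {y. h y \<noteq> 0})"
    and hpos: "\<And>y. 0 \<le> h y" and hint: "(\<integral>\<^sup>+ y. ennreal (h y) \<partial>lborel) \<le> 1"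
    and gc: "continuous_on UNIV g" and "0 < k" and "0 < \<epsilon>"
    and Gu: "uniformly_continuous_on U (dilate k g)"
    and U: "\<And>x y. x \<in> T \<Longrightarrow> h y \<noteq> 0 \<Longrightarrow> cball (x - y) 1 \<subseteq> U"
    and gT: "bounded (g ` T)" and star: "\<And>x t. x \<in> T \<Longrightarrow> 0 \<le> t \<Longrightarrow> t \<le> 1 \<Longrightarrow> t *\<^sub>R x \<in> T"
  shows "\<exists>f\<in>mixtures g. \<forall>x\<in>T. \<bar>conv (dilate k g) h x - f x\<bar> \<le> \<epsilon>"
proof -
  define I where "I = integral\<^sup>L lborel h"
  have "integrable lborel h"
    using hc hK by (rule integrable_continuous_compact_support)
       (metis (mono_tags, lifting) closure_subset mem_Collect_eq subsetD)
  then have "I \<le> 1"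
    using hint hpos by (simp add: I_def nn_integral_eq_integral)
  from conv_approx_by_translates[OF hc hK hpos continuous_on_dilate[OF gc] Gu U half_gt_zero[OF \<open>0 < \<epsilon>\<close>],
      folded I_def]
  obtain V w where "finite V" "\<forall>v. 0 \<le> w v" "sum w V = I" and riemann:
      "\<forall>x\<in>T. \<bar>conv (dilate k g) h x - (\<Sum>v\<in>V. w v * dilate k g (x - v))\<bar> \<le> \<epsilon> / 2 * I"
    by blast
  have "\<exists>\<sigma>>0. \<forall>x\<in>T. \<bar>\<sigma> powr (- real DIM('a)) * g ((1 / \<sigma>) *\<^sub>R x)\<bar> \<le> \<epsilon> / 2"
    using \<open>0 < \<epsilon>\<close> by (intro wide_component_small[OF gT] star) auto
  then obtain \<sigma> where "0 < \<sigma>" and wide: "\<And>x. x \<in> T \<Longrightarrow>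
      \<bar>\<sigma> powr (- real DIM('a)) * g ((1 / \<sigma>) *\<^sub>R x)\<bar> \<le> \<epsilon> / 2"
    by blast
  define f where "f x = (1 - sum w V) * (\<sigma> powr (- real DIM('a)) * g ((1 / \<sigma>) *\<^sub>R x))
                        + (\<Sum>v\<in>V. w v * dilate k g (x - v))" for x
  have "f \<in> mixtures g"
    unfolding f_def using \<open>finite V\<close> \<open>\<forall>v. 0 \<le> w v\<close> \<open>sum w V = I\<close> \<open>I \<le> 1\<close> \<open>0 < \<sigma>\<close> \<open>0 < k\<close>
    by (intro mixture_of_dilates_and_wide_component) auto
  moreover have "\<bar>conv (dilate k g) h x - f x\<bar> \<le> \<epsilon>" if "x \<in> T" for x
  proof -
    have "\<bar>(1 - I) * (\<sigma> powr (- real DIM('a)) * g ((1 / \<sigma>) *\<^sub>R x))\<bar>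
        = (1 - I) * \<bar>\<sigma> powr (- real DIM('a)) * g ((1 / \<sigma>) *\<^sub>R x)\<bar>"
      using \<open>I \<le> 1\<close> by (simp add: abs_mult)
    also have "\<dots> \<le> (1 - I) * (\<epsilon> / 2)"
      using wide[OF that] \<open>I \<le> 1\<close> by (intro mult_left_mono) auto
    finally have "\<bar>conv (dilate k g) h x - f x\<bar> \<le> \<epsilon> / 2 * I + (1 - I) * (\<epsilon> / 2)"
      using bspec[OF riemann that] unfolding f_def \<open>sum w V = I\<close> by linarith
    also have "\<dots> = \<epsilon> / 2" by (simp add: field_simps)
    finally show ?thesis using \<open>0 < \<epsilon>\<close> by simp
  qed
  ultimately show ?thesis by blast
qed

lemma uniform_approx_sequence:
  fixes F :: "'a \<Rightarrow> real"
  assumes "T \<noteq> {}" and approx: "\<And>e. 0 < e \<Longrightarrow> \<exists>f\<in>M. \<forall>x\<in>T. \<bar>F x - f x\<bar> \<le> e"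
  shows "\<exists>H. (\<forall>m. H m \<in> M) \<and> (\<lambda>m. SUP x\<in>T. ereal \<bar>F x - H m x\<bar>) \<longlonglongrightarrow> 0"
proof -
  obtain H where "\<And>m. H m \<in> M" and H: "\<And>m x. x \<in> T \<Longrightarrow> \<bar>F x - H m x\<bar> \<le> 1 / Suc m"
  proof -
    have "\<forall>m. \<exists>f\<in>M. \<forall>x\<in>T. \<bar>F x - f x\<bar> \<le> 1 / Suc m"
      using approx by simp
    then show thesis using that by metis
  qed
  have "(\<lambda>m. SUP x\<in>T. ereal \<bar>F x - H m x\<bar>) \<longlonglongrightarrow> 0"
  proof (rule tendsto_sandwich)
    obtain x0 where "x0 \<in> T" using \<open>T \<noteq> {}\<close> by blast
    show "\<forall>\<^sub>F m in sequentially. 0 \<le> (SUP x\<in>T. ereal \<bar>F x - H m x\<bar>)"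
      by (intro always_eventually allI SUP_upper2[OF \<open>x0 \<in> T\<close>]) simp
    show "\<forall>\<^sub>F m in sequentially. (SUP x\<in>T. ereal \<bar>F x - H m x\<bar>) \<le> ereal (1 / Suc m)"
      by (intro always_eventually allI SUP_least) (metis H ereal_less_eq(3))
    show "(\<lambda>m. ereal (1 / Suc m)) \<longlonglongrightarrow> 0"
      using LIMSEQ_Suc[OF lim_1_over_n] by (simp add: zero_ereal_def)
  qed simp
  with \<open>\<And>m. H m \<in> M\<close> show ?thesis by blast
qed

theorem lemma4:
  fixes h g :: "'a::euclidean_space \<Rightarrow> real" and r k :: real
  assumes "0 < r"
    and "continuous_on UNIV h"
    and "compact (closure {x. h x \<noteq> 0})"
    and "{x. h x \<noteq> 0} \<subseteq> ball 0 r"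
    and "\<forall>x. 0 \<le> h x"
    and "(\<integral>\<^sup>+ x. ennreal (h x) \<partial>lborel) \<le> 1"
    and "continuous_on UNIV g"
    and "is_pdf g"
    and "0 < k"
  shows "(\<exists>H :: nat \<Rightarrow> 'a \<Rightarrow> real. (\<forall>m. H m \<in> mixtures g) \<and>
            (\<lambda>m. SUP x\<in>cball 0 r. ereal \<bar>conv (dilate k g) h x - H m x\<bar>) \<longlonglongrightarrow> 0)
       \<and> (bounded (range g) \<and> uniformly_continuous_on UNIV g \<longrightarrow>
          (\<exists>H :: nat \<Rightarrow> 'a \<Rightarrow> real. (\<forall>m. H m \<in> mixtures g) \<and>
            (\<lambda>m. SUP x. ereal \<bar>conv (dilate k g) h x - H m x\<bar>) \<longlonglongrightarrow> 0))"
proof (intro conjI impI)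
  note approx = conv_dilate_approx_by_mixture[OF assms(2,3) spec[OF assms(5)] assms(6,7,9)]
  have "cball (x - y) 1 \<subseteq> cball 0 (2 * r + 1)" if "x \<in> cball 0 r" "h y \<noteq> 0" for x y
  proof -
    have "norm y < r" using that(2) assms(4) by auto
    then have "dist (x - y) 0 + 1 \<le> 2 * r + 1"
      using that(1) norm_triangle_ineq4[of x y] by simp
    then show ?thesis by (simp add: cball_subset_cball_iff)
  qed
  moreover have "uniformly_continuous_on (cball 0 (2 * r + 1)) (dilate k g)"
    using continuous_on_dilate[OF assms(7)]
    by (intro compact_uniformly_continuous) (auto intro: continuous_on_subset)
  moreover have "bounded (g ` cball 0 r)"
    using assms(7) by (intro compact_imp_bounded compact_continuous_image)
      (auto intro: continuous_on_subset)
  moreover have "t *\<^sub>R x \<in> cball 0 r" if "x \<in> cball 0 r" "0 \<le> t" "t \<le> 1" for x :: 'a and t :: real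
    using that mult_left_le_one_le[of "norm x" t] by auto
  ultimately show "\<exists>H. (\<forall>m. H m \<in> mixtures g) \<and>
      (\<lambda>m. SUP x\<in>cball 0 r. ereal \<bar>conv (dilate k g) h x - H m x\<bar>) \<longlonglongrightarrow> 0"
    using \<open>0 < r\<close> by (intro uniform_approx_sequence approx[where U="cball 0 (2 * r + 1)"]) auto
  assume "bounded (range g) \<and> uniformly_continuous_on UNIV g"
  then show "\<exists>H. (\<forall>m. H m \<in> mixtures g) \<and>
      (\<lambda>m. SUP x. ereal \<bar>conv (dilate k g) h x - H m x\<bar>) \<longlonglongrightarrow> 0"
    by (intro uniform_approx_sequence approx[where U=UNIV] uniformly_continuous_on_dilate) auto
qed

end
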